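(* Consider the control-affine system $\dot x = f(x) + g(x)u$ with $f,g$ Lipschitz and $\mathcal{C}^{m-1}$, state set $\mathcal{X}\subset\mathbb{R}^{n_x}$ compact, control set $\mathcal{U}\subset\mathbb{R}^{n_u}$ compact, and a $\mathcal{C}^m$ function $h$ of relative degree $m$. Assume (Assumption 1): the set $\mathcal{X}_e = \{x_e : \exists u_e \in \mathcal{U},\ 0 = f(x_e) + g(x_e)u_e\}$ is closed, convex and known, and $g(x_e)$ has full column rank for every $x_e \in \mathcal{X}_e$. Let $P_{\mathcal{X}_e}(x) = \arg\min\{\|x - x'\|_2 : x' \in \mathcal{X}_e\}$ and $\zeta(x_e) = -g(x_e)^\dagger f(x_e)$. With $\Gamma_i$, $\psi_i$, $a(x)$, $b(x)$ as in the context, let $c(x)$ be a vector orthogonal to $a(x)$ and continuous in $x$, let $d:\mathbb{R}\times\mathbb{R}\to\mathbb{R}$ be continuous with $d(0,0) > 0$, let $u_n$ be a nominal controller, and let $\pi'(x)$ be a minimizer of $\|u - u_n(x)\|_2^2$ over $u \in \mathcal{U}$ subject to $$a(x)^\top u \ge b(x), \qquad c(x)^\top\big[u - \zeta(P_{\mathcal{X}_e}(x))\big] \ge d\big(h(x), \|x - P_{\mathcal{X}_e}(x)\|_2\big).$$ Assume this problem is feasible for each $x \in \mathcal{X}$ and $\pi'(x) \notin \partial\mathcal{U}$. If the system controlled by $\pi'$ is at an equilibrium $(x_e,u_e)$, i.e. $u_e = \pi'(x_e)$ and $0 = f(x_e) + g(x_e)u_e$, then either (i) $u_n(x_e) = u_e$,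 or (ii) $d(h(x_e),0) = 0$ and $u_n(x_e) = \zeta(x_e) - \rho\, c(x_e)$ for some $\rho \ge 0$.
   Context: $h$ has relative degree $m$ means $L_g L_f^{i} h \equiv 0$ for $i = 0,\dots,m-2$. Let $\Gamma_1,\dots,\Gamma_m$ be class $\mathcal{K}$ functions (continuous, strictly increasing, zero at zero) with $\Gamma_i \in \mathcal{C}^{m-i}$; $\psi_0 = h$, $\psi_i = \dot\psi_{i-1} + \Gamma_i(\psi_{i-1})$ for $i = 1,\dots,m-1$ (time derivatives along the system); $a(x) = (L_g L_f^{m-1} h(x))^\top$ and $b(x) = -L_f^m h(x) - \sum_{i=0}^{m-1} L_f^i(\Gamma_{m-i}\circ\psi_{m-i-1})(x)$. $g^\dagger$ denotes the Moore–Penrose pseudoinverse and $\partial\mathcal{U}$ the boundary of $\mathcal{U}$. *)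

theory Defs
  imports "HOL-Analysis.Analysis"
begin

fun ck :: "nat \<Rightarrow> ('a::real_normed_vector \<Rightarrow> 'b::real_normed_vector) \<Rightarrow> bool" where
  "ck 0 F \<longleftrightarrow> continuous_on UNIV F"
| "ck (Suc k) F \<longleftrightarrow> (\<forall>x. F differentiable (at x)) \<and>
      (\<forall>v. ck k (\<lambda>x. frechet_derivative F (at x) v))"

definition lie :: "(real^'n \<Rightarrow> real^'n) \<Rightarrow> (real^'n \<Rightarrow> real) \<Rightarrow> real^'n \<Rightarrow> real" where
  "lie F phi x = frechet_derivative phi (at x) (F x)"

definition lie_iter :: "(real^'n \<Rightarrow> real^'n) \<Rightarrow> nat \<Rightarrow> (real^'n \<Rightarrow> real) \<Rightarrow> real^'n \<Rightarrow> real" where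
  "lie_iter F i phi = ((lie F) ^^ i) phi"

text \<open>L_g phi for the input matrix g (columns g_j): the row vector (L_{g_j} phi)_j,
  stored as a vector in real^'m (i.e. already transposed).\<close>
definition lie_g :: "(real^'n \<Rightarrow> real^'m^'n) \<Rightarrow> (real^'n \<Rightarrow> real) \<Rightarrow> real^'n \<Rightarrow> real^'m" where
  "lie_g g phi x = (\<chi> j. lie (\<lambda>y. column j (g y)) phi x)"

text \<open>psi_0 = h, psi_i = d/dt psi_{i-1} + Gamma_i(psi_{i-1}); the time derivative along the
  system of psi_{i-1} (i <= m-1) is L_f psi_{i-1}, as L_g psi_{i-1} = 0 by relative degree.\<close>
fun psi :: "(real^'n \<Rightarrow> real^'n) \<Rightarrow> (nat \<Rightarrow> real \<Rightarrow> real) \<Rightarrow> (real^'n \<Rightarrow> real) \<Rightarrow> nat \<Rightarrow> real^'n \<Rightarrow> real" where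
  "psi f \<Gamma> h 0 = h"
| "psi f \<Gamma> h (Suc i) = (\<lambda>x. lie f (psi f \<Gamma> h i) x + \<Gamma> (Suc i) (psi f \<Gamma> h i x))"

definition acoef :: "(real^'n \<Rightarrow> real^'n) \<Rightarrow> (real^'n \<Rightarrow> real^'m^'n) \<Rightarrow> (real^'n \<Rightarrow> real) \<Rightarrow> nat \<Rightarrow> real^'n \<Rightarrow> real^'m" where
  "acoef f g h m x = lie_g g (lie_iter f (m - 1) h) x"

definition bcoef :: "(real^'n \<Rightarrow> real^'n) \<Rightarrow> (nat \<Rightarrow> real \<Rightarrow> real) \<Rightarrow> (real^'n \<Rightarrow> real) \<Rightarrow> nat \<Rightarrow> real^'n \<Rightarrow> real" where
  "bcoef f \<Gamma> h m x = - lie_iter f m h x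
     - (\<Sum>i<m. lie_iter f i (\<lambda>y. \<Gamma> (m - i) (psi f \<Gamma> h (m - i - 1) y)) x)"

definition pinv :: "real^'m^'n \<Rightarrow> real^'n^'m" where
  "pinv A = (THE B. A ** B ** A = A \<and> B ** A ** B = B \<and>
                     transpose (A ** B) = A ** B \<and> transpose (B ** A) = B ** A)"

definition class_K :: "(real \<Rightarrow> real) \<Rightarrow> bool" where
  "class_K G \<longleftrightarrow> continuous_on UNIV G \<and> strict_mono G \<and> G 0 = 0"

end

theory Submission
  imports Defs
begin

(* At an equilibrium x_e the state lies in X_e, so P_{X_e}(x_e) = x_e and, g(x_e) having full
   column rank, zeta(x_e) = u_e. The second constraint then reads 0 >= d(h(x_e), 0), so
   h(x_e) /= 0 because d(0,0) > 0.
   At an equilibrium L_f phi(x_e) = - L_g phi(x_e) u_e, so the Lie derivative along f of any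
   function annihilated by L_g vanishes at x_e. Through the relative-degree structure this
   collapses a(x_e)^T u_e - b(x_e) to Gamma_m(psi_{m-1}(x_e)) and psi_{i+1}(x_e) to
   Gamma_{i+1}(psi_i(x_e)); class K functions vanish only at 0, so the CBF constraint is
   inactive at u_e.
   As u_e is also interior to U, only the half-space constraint c(x_e)^T (u - u_e) >= d(h(x_e), 0)
   can be active, and the first-order condition for u_e as nearest feasible point to u_n(x_e)
   yields (i) or (ii). *)

section \<open>Smoothness classes and Lie derivatives\<close>

lemma frechet_derivative_add:
  assumes "u differentiable (at x)" "w differentiable (at x)"
  shows "frechet_derivative (\<lambda>x. u x + w x) (at x) =
         (\<lambda>v. frechet_derivative u (at x) v + frechet_derivative w (at x) v)"
  using assms by (intro frechet_derivative_at[symmetric] has_derivative_add)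
    (simp_all add: frechet_derivative_works)

lemma frechet_derivative_mult:
  fixes u w :: "'a::real_normed_vector \<Rightarrow> real"
  assumes "u differentiable (at x)" "w differentiable (at x)"
  shows "frechet_derivative (\<lambda>x. u x * w x) (at x) =
         (\<lambda>v. u x * frechet_derivative w (at x) v + frechet_derivative u (at x) v * w x)"
  using assms by (intro frechet_derivative_at[symmetric] has_derivative_mult)
    (simp_all add: frechet_derivative_works)

lemma frechet_derivative_vec_nth:
  fixes u :: "'a::real_normed_vector \<Rightarrow> real^'n"
  assumes "u differentiable (at x)"
  shows "frechet_derivative (\<lambda>x. u x $ i) (at x) = (\<lambda>v. frechet_derivative u (at x) v $ i)"
  using assms
  by (intro frechet_derivative_at[symmetric] bounded_linear.has_derivative[OF bounded_linear_vec_nth])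
    (simp add: frechet_derivative_works)

lemma differentiable_vec_nth:
  fixes u :: "'a::real_normed_vector \<Rightarrow> real^'n"
  shows "u differentiable F \<Longrightarrow> (\<lambda>x. u x $ i) differentiable F"
  unfolding differentiable_def
  using bounded_linear.has_derivative[OF bounded_linear_vec_nth] by blast

lemma ck_SucD: "ck (Suc k) F \<Longrightarrow> ck k F"
proof (induction k arbitrary: F)
  case 0
  then show ?case
    by (auto intro!: differentiable_imp_continuous_on
        simp: differentiable_on_def differentiable_at_withinI)
next
  case (Suc k)
  then show ?case by auto
qed

lemma ck_le: "ck k F \<Longrightarrow> j \<le> k \<Longrightarrow> ck j F"
  by (induction k) (auto simp del: ck.simps dest: ck_SucD simp: le_Suc_eq)

lemma ck_const: "ck k (\<lambda>x::'a::real_normed_vector. c::'b::real_normed_vector)"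
  by (induction k arbitrary: c) simp_all

lemma ck_add:
  fixes u w :: "'a::real_normed_vector \<Rightarrow> 'b::real_normed_vector"
  shows "ck k u \<Longrightarrow> ck k w \<Longrightarrow> ck k (\<lambda>x. u x + w x)"
  by (induction k arbitrary: u w) (simp_all add: continuous_on_add frechet_derivative_add)

lemma ck_sum:
  fixes u :: "'i \<Rightarrow> 'a::real_normed_vector \<Rightarrow> 'b::real_normed_vector"
  assumes "finite S" "\<And>i. i \<in> S \<Longrightarrow> ck k (u i)"
  shows "ck k (\<lambda>x. \<Sum>i\<in>S. u i x)"
  using assms by (induction S rule: finite_induct) (simp_all add: ck_const ck_add)

lemma ck_mult:
  fixes u w :: "'a::real_normed_vector \<Rightarrow> real"
  shows "ck k u \<Longrightarrow> ck k w \<Longrightarrow> ck k (\<lambda>x. u x * w x)"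
proof (induction k arbitrary: u w)
  case 0
  then show ?case by (simp add: continuous_on_mult)
next
  case (Suc k)
  have "ck k (\<lambda>x. u x * frechet_derivative w (at x) v + frechet_derivative u (at x) v * w x)"
    for v using Suc.prems ck_SucD[OF Suc.prems(1)] ck_SucD[OF Suc.prems(2)]
    by (intro ck_add Suc.IH) auto
  with Suc.prems show ?case by (simp add: frechet_derivative_mult)
qed

lemma ck_vec_nth:
  fixes u :: "'a::real_normed_vector \<Rightarrow> real^'n"
  shows "ck k u \<Longrightarrow> ck k (\<lambda>x. u x $ i)"
  by (induction k arbitrary: u)
    (simp_all add: continuous_on_component frechet_derivative_vec_nth differentiable_vec_nth)

lemma ck_lie:
  assumes "ck k f" "ck (Suc k) \<phi>"
  shows "ck k (lie f \<phi>)"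
proof -
  have "lie f \<phi> x = (\<Sum>i\<in>UNIV. f x $ i * frechet_derivative \<phi> (at x) (axis i 1))" for x
  proof -
    have "linear (frechet_derivative \<phi> (at x))"
      using assms(2) by (simp add: frechet_derivative_works) (blast intro: has_derivative_linear)
    then have "frechet_derivative \<phi> (at x) (\<Sum>i\<in>UNIV. f x $ i *\<^sub>R axis i 1) =
        (\<Sum>i\<in>UNIV. f x $ i * frechet_derivative \<phi> (at x) (axis i 1))"
      by (simp add: linear_sum linear_scale)
    then show ?thesis
      unfolding lie_def by (simp add: basis_expansion[of "f x", unfolded scalar_mult_eq_scaleR])
  qed
  moreover have "ck k (\<lambda>x. \<Sum>i\<in>UNIV. f x $ i * frechet_derivative \<phi> (at x) (axis i 1))"
    using assms by (intro ck_sum ck_mult ck_vec_nth) auto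
  ultimately show ?thesis by presburger
qed

lemma lie_iter_0 [simp]: "lie_iter f 0 \<phi> = \<phi>"
  by (simp add: lie_iter_def)

lemma lie_iter_Suc: "lie_iter f (Suc i) \<phi> = lie f (lie_iter f i \<phi>)"
  by (simp add: lie_iter_def)

lemma lie_iter_Suc': "lie_iter f (Suc i) \<phi> = lie_iter f i (lie f \<phi>)"
  by (simp add: lie_iter_def funpow_swap1)

lemma ck_lie_iter:
  assumes "ck k f" "ck (Suc k) \<phi>" "i \<le> k"
  shows "ck (Suc k - i) (lie_iter f i \<phi>)"
  using assms(3)
proof (induction i)
  case 0
  then show ?case using assms(2) by simp
next
  case (Suc i)
  have "ck (Suc (k - i)) (lie_iter f i \<phi>)"
    using Suc by (simp add: Suc_diff_le)
  moreover have "ck (k - i) f" using assms(1) by (rule ck_le) simp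
  ultimately show ?case by (simp add: lie_iter_Suc ck_lie)
qed

lemma lie_add:
  assumes "\<And>x. u differentiable (at x)" "\<And>x. w differentiable (at x)"
  shows "lie F (\<lambda>x. u x + w x) = (\<lambda>x. lie F u x + lie F w x)"
  using assms by (simp add: lie_def frechet_derivative_add fun_eq_iff)

lemma lie_mult:
  assumes "\<And>x. u differentiable (at x)" "\<And>x. w differentiable (at x)"
  shows "lie F (\<lambda>x. u x * w x) = (\<lambda>x. u x * lie F w x + lie F u x * w x)"
  using assms by (simp add: lie_def frechet_derivative_mult fun_eq_iff)

lemma lie_compose:
  fixes \<Gamma> :: "real \<Rightarrow> real"
  assumes "\<And>s. \<Gamma> differentiable (at s)" "\<And>x. \<phi> differentiable (at x)"
  shows "lie F (\<lambda>x. \<Gamma> (\<phi> x)) = (\<lambda>x. frechet_derivative \<Gamma> (at (\<phi> x)) 1 * lie F \<phi> x)"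
proof
  fix x
  have lin: "linear (frechet_derivative \<Gamma> (at (\<phi> x)))"
    using assms(1) by (simp add: frechet_derivative_works) (blast intro: has_derivative_linear)
  have scale: "frechet_derivative \<Gamma> (at (\<phi> x)) t = t * frechet_derivative \<Gamma> (at (\<phi> x)) 1"
    for t using linear_scale[OF lin, of t 1] by simp
  have "frechet_derivative (\<Gamma> \<circ> \<phi>) (at x) =
        frechet_derivative \<Gamma> (at (\<phi> x)) \<circ> frechet_derivative \<phi> (at x)"
    using assms by (intro frechet_derivative_compose)
  then show "lie F (\<lambda>x. \<Gamma> (\<phi> x)) x = frechet_derivative \<Gamma> (at (\<phi> x)) 1 * lie F \<phi> x"
    by (simp add: lie_def comp_def scale[of "frechet_derivative \<phi> (at x) (F x)"] mult.commute)
qed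

lemma lie_g_eq_0_iff: "lie_g g \<phi> x = 0 \<longleftrightarrow> (\<forall>k. lie (\<lambda>y. column k (g y)) \<phi> x = 0)"
  by (simp add: lie_g_def vec_eq_iff)

section \<open>Relative degree\<close>

fun rel_deg_gt :: "(real^'n \<Rightarrow> real^'n) \<Rightarrow> (real^'n \<Rightarrow> real^'m^'n) \<Rightarrow> nat \<Rightarrow>
    (real^'n \<Rightarrow> real) \<Rightarrow> bool" where
  "rel_deg_gt f g 0 \<phi> \<longleftrightarrow> True"
| "rel_deg_gt f g (Suc r) \<phi> \<longleftrightarrow>
     (\<forall>x. \<phi> differentiable (at x) \<and> lie_g g \<phi> x = 0) \<and> rel_deg_gt f g r (lie f \<phi>)"

lemma rel_deg_gt_iff:
  "rel_deg_gt f g r \<phi> \<longleftrightarrow>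
     (\<forall>k<r. \<forall>x. lie_iter f k \<phi> differentiable (at x) \<and> lie_g g (lie_iter f k \<phi>) x = 0)"
proof (induction r arbitrary: \<phi>)
  case 0
  then show ?case by simp
next
  case (Suc r)
  then show ?case by (simp add: All_less_Suc2 lie_iter_Suc' all_conj_distrib)
qed

lemma rel_deg_gt_SucD: "rel_deg_gt f g (Suc r) \<phi> \<Longrightarrow> rel_deg_gt f g r \<phi>"
  by (simp add: rel_deg_gt_iff)

lemma rel_deg_gt_add:
  "rel_deg_gt f g r u \<Longrightarrow> rel_deg_gt f g r w \<Longrightarrow> rel_deg_gt f g r (\<lambda>x. u x + w x)"
  by (induction r arbitrary: u w) (simp_all add: lie_add lie_g_eq_0_iff)

lemma rel_deg_gt_mult:
  "rel_deg_gt f g r u \<Longrightarrow> rel_deg_gt f g r w \<Longrightarrow> rel_deg_gt f g r (\<lambda>x. u x * w x)"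
proof (induction r arbitrary: u w)
  case 0
  then show ?case by simp
next
  case (Suc r)
  have du: "\<And>x. u differentiable (at x)" and dw: "\<And>x. w differentiable (at x)"
    using Suc.prems by simp_all
  have "rel_deg_gt f g r (\<lambda>x. u x * lie f w x + lie f u x * w x)"
    using Suc.prems rel_deg_gt_SucD[OF Suc.prems(1)] rel_deg_gt_SucD[OF Suc.prems(2)]
    by (intro rel_deg_gt_add Suc.IH) simp_all
  moreover have "lie_g g (\<lambda>x. u x * w x) x = 0" for x
    using Suc.prems by (simp add: lie_g_eq_0_iff lie_mult[OF du dw])
  ultimately show ?case
    by (simp add: lie_mult[OF du dw] du dw differentiable_mult)
qed

lemma rel_deg_gt_compose:
  fixes \<Gamma> :: "real \<Rightarrow> real"
  shows "ck r \<Gamma> \<Longrightarrow> rel_deg_gt f g r \<phi> \<Longrightarrow> rel_deg_gt f g r (\<lambda>x. \<Gamma> (\<phi> x))"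
proof (induction r arbitrary: \<Gamma> \<phi>)
  case 0
  then show ?case by simp
next
  case (Suc r)
  have d\<Gamma>: "\<And>s. \<Gamma> differentiable (at s)" and d\<phi>: "\<And>x. \<phi> differentiable (at x)"
    using Suc.prems by simp_all
  have "rel_deg_gt f g r (\<lambda>x. frechet_derivative \<Gamma> (at (\<phi> x)) 1)"
    using Suc.prems Suc.IH[of "\<lambda>s. frechet_derivative \<Gamma> (at s) 1" \<phi>]
      rel_deg_gt_SucD[OF Suc.prems(2)] by simp
  then have "rel_deg_gt f g r (\<lambda>x. frechet_derivative \<Gamma> (at (\<phi> x)) 1 * lie f \<phi> x)"
    using Suc.prems(2) by (intro rel_deg_gt_mult) simp_all
  moreover have "lie_g g (\<lambda>x. \<Gamma> (\<phi> x)) x = 0" for x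
    using Suc.prems by (simp add: lie_g_eq_0_iff lie_compose[OF d\<Gamma> d\<phi>])
  moreover have "(\<lambda>x. \<Gamma> (\<phi> x)) differentiable (at x)" for x
    using differentiable_compose[of \<Gamma> \<phi>] d\<Gamma> d\<phi> by (simp add: o_def)
  ultimately show ?case by (simp add: lie_compose[OF d\<Gamma> d\<phi>])
qed

lemma lie_at_equilibrium:
  assumes "\<phi> differentiable (at x)" "0 = f x + g x *v u"
  shows "lie f \<phi> x = - (lie_g g \<phi> x \<bullet> u)"
proof -
  have lin: "linear (frechet_derivative \<phi> (at x))"
    using assms(1) by (simp add: frechet_derivative_works) (blast intro: has_derivative_linear)
  have "f x = - (\<Sum>k\<in>UNIV. u $ k *\<^sub>R column k (g x))"
    using assms(2) by (simp add: matrix_mult_sum eq_neg_iff_add_eq_0 scalar_mult_eq_scaleR)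
  then have "lie f \<phi> x = - (\<Sum>k\<in>UNIV. u $ k * frechet_derivative \<phi> (at x) (column k (g x)))"
    unfolding lie_def using lin by (simp add: linear_neg linear_sum linear_scale)
  then show ?thesis
    by (simp add: inner_vec_def lie_g_def lie_def mult.commute)
qed

lemma lie_iter_eq_0_at_equilibrium:
  assumes "rel_deg_gt f g r \<phi>" "k < r" "0 = f x + g x *v u"
  shows "lie_iter f (Suc k) \<phi> x = 0"
proof -
  have "lie_iter f k \<phi> differentiable (at x)" "lie_g g (lie_iter f k \<phi>) x = 0"
    using assms(1,2) by (simp_all add: rel_deg_gt_iff)
  then show ?thesis
    using lie_at_equilibrium[of "lie_iter f k \<phi>" x f g u] assms(3) by (simp add: lie_iter_Suc)
qed

section \<open>High-order control barrier functions at an equilibrium\<close>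

lemma class_K_eq_0_iff: "class_K G \<Longrightarrow> G s = 0 \<longleftrightarrow> s = 0"
  unfolding class_K_def using strict_mono_eq[of G s 0] by auto

locale hocbf =
  fixes f :: "real^'n \<Rightarrow> real^'n" and g :: "real^'n \<Rightarrow> real^'m^'n"
    and h :: "real^'n \<Rightarrow> real" and m :: nat and \<Gamma> :: "nat \<Rightarrow> real \<Rightarrow> real"
  assumes f_smooth: "ck (m - 1) f"
    and h_smooth: "ck m h"
    and m_pos: "m \<ge> 1"
    and rel_deg: "\<And>i x. i + 1 < m \<Longrightarrow> lie_g g (lie_iter f i h) x = 0"
    and Gamma_K: "\<And>i. 1 \<le> i \<Longrightarrow> i \<le> m \<Longrightarrow> class_K (\<Gamma> i)"
    and Gamma_smooth: "\<And>i. 1 \<le> i \<Longrightarrow> i \<le> m \<Longrightarrow> ck (m - i) (\<Gamma> i)"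
begin

lemma lie_iter_h_differentiable:
  assumes "k < m"
  shows "lie_iter f k h differentiable (at x)"
proof -
  have "ck (Suc (m - 1)) h" using h_smooth m_pos by simp
  then have "ck (Suc (m - 1) - k) (lie_iter f k h)"
    using assms by (intro ck_lie_iter[OF f_smooth]) auto
  moreover have "Suc (m - 1) - k = Suc (m - 1 - k)" using assms by simp
  ultimately show ?thesis by simp
qed

lemma rel_deg_gt_h: "rel_deg_gt f g (m - 1) h"
  by (simp add: rel_deg_gt_iff lie_iter_h_differentiable rel_deg)

lemma rel_deg_gt_psi: "j \<le> m - 1 \<Longrightarrow> rel_deg_gt f g (m - 1 - j) (psi f \<Gamma> h j)"
proof (induction j)
  case 0
  then show ?case using rel_deg_gt_h by simp
next
  case (Suc j)
  define r where "r = m - 1 - Suc j"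
  have IH: "rel_deg_gt f g (Suc r) (psi f \<Gamma> h j)"
    using Suc unfolding r_def by (simp add: Suc_diff_Suc)
  have "ck (Suc r) (\<Gamma> (Suc j))"
    using Gamma_smooth[of "Suc j"] Suc.prems unfolding r_def by (simp add: Suc_diff_Suc)
  then have "rel_deg_gt f g r (\<lambda>x. \<Gamma> (Suc j) (psi f \<Gamma> h j x))"
    using rel_deg_gt_compose[OF ck_SucD rel_deg_gt_SucD[OF IH]] by blast
  moreover have "rel_deg_gt f g r (lie f (psi f \<Gamma> h j))" using IH by simp
  ultimately show ?case
    unfolding r_def[symmetric] by (simp add: rel_deg_gt_add)
qed

context
  fixes x u
  assumes equilibrium: "0 = f x + g x *v u"
begin

lemma psi_Suc_at_equilibrium:
  assumes "Suc j \<le> m - 1"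
  shows "psi f \<Gamma> h (Suc j) x = \<Gamma> (Suc j) (psi f \<Gamma> h j x)"
proof -
  have "lie_iter f (Suc 0) (psi f \<Gamma> h j) x = 0"
    using assms rel_deg_gt_psi[of j] equilibrium by (intro lie_iter_eq_0_at_equilibrium) auto
  then show ?thesis by (simp add: lie_iter_Suc)
qed

lemma h_eq_0_if_psi_eq_0: "j \<le> m - 1 \<Longrightarrow> psi f \<Gamma> h j x = 0 \<Longrightarrow> h x = 0"
proof (induction j)
  case 0
  then show ?case by simp
next
  case (Suc j)
  have "\<Gamma> (Suc j) (psi f \<Gamma> h j x) = 0"
    using Suc.prems psi_Suc_at_equilibrium by simp
  moreover have "class_K (\<Gamma> (Suc j))" using Gamma_K Suc.prems by simp
  ultimately have "psi f \<Gamma> h j x = 0" by (simp add: class_K_eq_0_iff)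
  then show ?case using Suc by simp
qed

lemma acoef_at_equilibrium: "acoef f g h m x \<bullet> u = - lie_iter f m h x"
proof -
  have "lie_iter f m h = lie f (lie_iter f (m - 1) h)"
    using lie_iter_Suc[of f "m - 1" h] m_pos by simp
  then show ?thesis
    unfolding acoef_def
    using lie_at_equilibrium[of "lie_iter f (m - 1) h" x f g u] lie_iter_h_differentiable[of "m - 1"]
      equilibrium m_pos by simp
qed

lemma bcoef_at_equilibrium:
  "bcoef f \<Gamma> h m x = - lie_iter f m h x - \<Gamma> m (psi f \<Gamma> h (m - 1) x)"
proof -
  have "lie_iter f i (\<lambda>y. \<Gamma> (m - i) (psi f \<Gamma> h (m - i - 1) y)) x = 0" if "0 < i" "i < m" for i
  proof -
    have "rel_deg_gt f g i (psi f \<Gamma> h (m - i - 1))"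
      using rel_deg_gt_psi[of "m - i - 1"] that by simp
    moreover have "ck i (\<Gamma> (m - i))" using Gamma_smooth[of "m - i"] that by simp
    ultimately have rd: "rel_deg_gt f g i (\<lambda>y. \<Gamma> (m - i) (psi f \<Gamma> h (m - i - 1) y))"
      by (rule rel_deg_gt_compose[rotated])
    have "lie_iter f (Suc (i - 1)) (\<lambda>y. \<Gamma> (m - i) (psi f \<Gamma> h (m - i - 1) y)) x = 0"
      using that by (intro lie_iter_eq_0_at_equilibrium[OF rd _ equilibrium]) simp
    then show ?thesis using that by simp
  qed
  then have "(\<Sum>i<m. lie_iter f i (\<lambda>y. \<Gamma> (m - i) (psi f \<Gamma> h (m - i - 1) y)) x) =
      (\<Sum>i\<in>{0}. lie_iter f i (\<lambda>y. \<Gamma> (m - i) (psi f \<Gamma> h (m - i - 1) y)) x)"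
    using m_pos by (intro sum.mono_neutral_right) auto
  then show ?thesis unfolding bcoef_def by simp
qed

lemma cbf_constraint_active_imp_h_eq_0:
  assumes "acoef f g h m x \<bullet> u = bcoef f \<Gamma> h m x"
  shows "h x = 0"
proof -
  have "\<Gamma> m (psi f \<Gamma> h (m - 1) x) = 0"
    using assms acoef_at_equilibrium bcoef_at_equilibrium by simp
  then have "psi f \<Gamma> h (m - 1) x = 0"
    using Gamma_K[of m] m_pos by (simp add: class_K_eq_0_iff)
  then show ?thesis using h_eq_0_if_psi_eq_0[of "m - 1"] by simp
qed

end

end

section \<open>Pseudoinverse of a matrix of full column rank\<close>

lemma inj_transpose_mult_self:
  fixes G :: "real^'m^'n"
  assumes "inj ((*v) G)"
  shows "inj ((*v) (transpose G ** G))"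
proof (rule linear_injective_0[OF matrix_vector_mul_linear, THEN iffD2], intro allI impI)
  fix x assume "(transpose G ** G) *v x = 0"
  then have "(G *v x) \<bullet> (G *v x) = 0"
    by (metis dot_lmul_matrix inner_zero_right matrix_vector_mul_assoc vector_transpose_matrix)
  then have "G *v x = G *v 0" by simp
  then show "x = 0" by (rule injD[OF assms])
qed

lemma pinv_left_inverse:
  fixes G :: "real^'m^'n"
  assumes "inj ((*v) G)"
  shows "pinv G ** G = mat 1"
proof -
  define S where "S = transpose G ** G"
  obtain M where M: "M ** S = mat 1"
    using inj_transpose_mult_self[OF assms] matrix_left_invertible_injective unfolding S_def by blast
  then have MS: "S ** M = mat 1" using matrix_left_right_inverse by blast
  have "transpose S = S" by (simp add: S_def matrix_transpose_mul)
  have "transpose M = transpose M ** S ** M" by (simp add: matrix_mul_assoc[symmetric] MS)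
  also have "\<dots> = transpose (S ** M) ** M"
    using \<open>transpose S = S\<close> by (simp add: matrix_transpose_mul)
  also have "\<dots> = M" by (simp add: MS transpose_mat)
  finally have M_sym: "transpose M = M" .
  define B where "B = M ** transpose G"
  have BG: "B ** G = mat 1" using M by (simp add: B_def S_def matrix_mul_assoc)
  (* B = (G^T G)^-1 G^T; any B' satisfying the Penrose conditions has G^T = G^T G B', so B' = B. *)
  have "pinv G = B"
    unfolding pinv_def
  proof (rule the_equality)
    show "G ** B ** G = G \<and> B ** G ** B = B \<and>
        transpose (G ** B) = G ** B \<and> transpose (B ** G) = B ** G"
      using BG by (auto simp: B_def matrix_mul_assoc[symmetric] matrix_transpose_mul M_sym)
  next
    fix B' assume "G ** B' ** G = G \<and> B' ** G ** B' = B' \<and>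
        transpose (G ** B') = G ** B' \<and> transpose (B' ** G) = B' ** G"
    then have GB'G: "G ** B' ** G = G" and GB'_sym: "transpose (G ** B') = G ** B'" by simp_all
    have "transpose G = transpose G ** transpose (G ** B')"
      using GB'G by (metis matrix_transpose_mul)
    also have "\<dots> = S ** B'"
      using GB'_sym by (simp add: S_def matrix_mul_assoc)
    finally show "B' = B"
      unfolding B_def by (metis M matrix_mul_assoc matrix_mul_lid)
  qed
  with BG show ?thesis by simp
qed

lemma pinv_mult_cancel_left:
  fixes G :: "real^'m^'n"
  assumes "rank G = CARD('m)"
  shows "pinv G *v (G *v u) = u"
  using pinv_left_inverse assms full_rank_injective by (metis matrix_vector_mul_assoc matrix_vector_mul_lid)

section \<open>Nearest points under a half-space constraint\<close>

lemma nearest_point_inner_nonpos: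
  fixes p y v :: "'a::real_inner"
  assumes feasible: "\<forall>\<^sub>F t in at_right 0. p + t *\<^sub>R v \<in> S"
    and nearest: "\<And>u. u \<in> S \<Longrightarrow> norm (p - y) \<le> norm (u - y)"
  shows "v \<bullet> (y - p) \<le> 0"
proof (rule ccontr)
  define w where "w = y - p"
  assume "\<not> v \<bullet> (y - p) \<le> 0"
  then have vw: "v \<bullet> w > 0" by (simp add: w_def)
  then have "v \<noteq> 0" by auto
  obtain b where b: "b > 0" "\<And>t. 0 < t \<Longrightarrow> t < b \<Longrightarrow> p + t *\<^sub>R v \<in> S"
    using feasible by (auto simp: eventually_at_right_field)
  define t where "t = min (b / 2) ((v \<bullet> w) / (norm v)\<^sup>2)"
  have t: "0 < t" "t < b" "t * (norm v)\<^sup>2 \<le> v \<bullet> w"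
    using b vw \<open>v \<noteq> 0\<close> by (auto simp: t_def min_def field_simps)
  have "(norm (p + t *\<^sub>R v - y))\<^sup>2 = (norm w)\<^sup>2 - 2 * t * (v \<bullet> w) + t * (t * (norm v)\<^sup>2)"
    unfolding w_def power2_norm_eq_inner
    by (simp add: inner_diff_left inner_diff_right inner_add_left inner_add_right
        inner_commute power2_eq_square algebra_simps)
  also have "\<dots> < (norm w)\<^sup>2"
    using t vw mult_left_mono[OF t(3), of t] by (simp add: algebra_simps)
  finally have "norm (p + t *\<^sub>R v - y) < norm (p - y)"
    by (simp add: w_def norm_minus_commute power2_less_imp_less)
  with nearest[OF b(2)[OF t(1,2)]] show False by simp
qed

lemma inner_self_le_0_iff:
  fixes x :: "'a::real_inner"
  shows "x \<bullet> x \<le> 0 \<longleftrightarrow> x = 0"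
  using inner_gt_zero_iff[of x] by (auto simp del: inner_gt_zero_iff)

lemma halfspace_polar:
  fixes c w :: "'a::real_inner"
  assumes "\<And>v. c \<bullet> v \<ge> 0 \<Longrightarrow> v \<bullet> w \<le> 0"
  shows "\<exists>\<rho>\<ge>0. w = - \<rho> *\<^sub>R c"
proof (cases "c = 0")
  case True
  then have "w \<bullet> w \<le> 0" using assms[of w] by simp
  then show ?thesis by (auto simp: inner_self_le_0_iff)
next
  case False
  define k where "k = (w \<bullet> c) / (c \<bullet> c)"
  define q where "q = w - k *\<^sub>R c"
  have "c \<bullet> q = 0" using False by (simp add: q_def k_def inner_diff_right inner_commute)
  then have "q \<bullet> q = q \<bullet> w"
    by (simp add: q_def inner_diff_right inner_commute)
  also have "\<dots> \<le> 0" using assms \<open>c \<bullet> q = 0\<close> by simp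
  finally have "w = k *\<^sub>R c" by (simp add: q_def inner_self_le_0_iff)
  moreover have "k \<le> 0"
    using assms[of c] False by (simp add: k_def inner_commute divide_nonpos_pos)
  ultimately show ?thesis by (intro exI[of _ "- k"]) simp
qed

lemma eventually_feasible_ray:
  fixes p a c v :: "'a::real_inner"
  assumes "p \<in> interior U" "a \<bullet> p > b" "\<forall>\<^sub>F t in at_right 0. d0 \<le> t * (c \<bullet> v)"
  shows "\<forall>\<^sub>F t in at_right 0. p + t *\<^sub>R v \<in> {u \<in> U. a \<bullet> u \<ge> b \<and> c \<bullet> (u - p) \<ge> d0}"
proof -
  have lim: "((\<lambda>t. p + t *\<^sub>R v) \<longlongrightarrow> p) (at_right 0)"
    by (auto intro!: tendsto_eq_intros)
  have "\<forall>\<^sub>F t in at_right 0. p + t *\<^sub>R v \<in> interior U"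
    using topological_tendstoD[OF lim open_interior assms(1)] .
  moreover have "\<forall>\<^sub>F t in at_right 0. a \<bullet> (p + t *\<^sub>R v) > b"
    using order_tendstoD(1)[OF tendsto_inner[OF tendsto_const lim] assms(2)] .
  ultimately show ?thesis
    using assms(3) by eventually_elim (auto dest: interior_subset[THEN subsetD])
qed

lemma nearest_point_kkt:
  fixes p y a c :: "'a::real_inner"
  assumes "p \<in> interior U" "a \<bullet> p > b" "d0 \<le> 0"
    and nearest: "\<And>u. u \<in> U \<Longrightarrow> a \<bullet> u \<ge> b \<Longrightarrow> c \<bullet> (u - p) \<ge> d0 \<Longrightarrow>
        norm (p - y) \<le> norm (u - y)"
  shows "y = p \<or> (d0 = 0 \<and> (\<exists>\<rho>\<ge>0. y = p - \<rho> *\<^sub>R c))"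
proof -
  have descent: "v \<bullet> (y - p) \<le> 0" if "\<forall>\<^sub>F t in at_right 0. d0 \<le> t * (c \<bullet> v)" for v
    using nearest by (intro nearest_point_inner_nonpos[OF eventually_feasible_ray[OF assms(1,2) that]])
      auto
  show ?thesis
  proof (cases "d0 = 0")
    case True
    have "v \<bullet> (y - p) \<le> 0" if "c \<bullet> v \<ge> 0" for v
      using that True eventually_at_right_less[of 0]
      by (intro descent) (auto elim: eventually_mono)
    then obtain \<rho> where "\<rho> \<ge> 0" "y - p = - \<rho> *\<^sub>R c"
      using halfspace_polar by blast
    then show ?thesis using True by (auto simp: algebra_simps)
  next
    case False
    then have "d0 < 0" using assms(3) by simp
    have "((\<lambda>t. t * (c \<bullet> (y - p))) \<longlongrightarrow> 0) (at_right 0)"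
      by (auto intro!: tendsto_eq_intros)
    then have "\<forall>\<^sub>F t in at_right 0. d0 < t * (c \<bullet> (y - p))"
      using \<open>d0 < 0\<close> by (rule order_tendstoD(1))
    then have "(y - p) \<bullet> (y - p) \<le> 0"
      by (intro descent) (auto elim: eventually_mono)
    then show ?thesis by (simp add: inner_self_le_0_iff)
  qed
qed

theorem proposition3:
  fixes f :: "real^'n \<Rightarrow> real^'n"
    and g :: "real^'n \<Rightarrow> real^'m^'n"
    and h :: "real^'n \<Rightarrow> real"
    and X Xe :: "(real^'n) set"
    and U :: "(real^'m) set"
    and m :: nat
    and \<Gamma> :: "nat \<Rightarrow> real \<Rightarrow> real"
    and c :: "real^'n \<Rightarrow> real^'m"
    and d :: "real \<Rightarrow> real \<Rightarrow> real"
    and un \<pi>' :: "real^'n \<Rightarrow> real^'m"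
    and xe :: "real^'n" and ue :: "real^'m"
  assumes f_lip: "\<exists>L. L-lipschitz_on UNIV f"
    and g_lip: "\<exists>L. L-lipschitz_on UNIV g"
    and f_smooth: "ck (m - 1) f"
    and g_smooth: "ck (m - 1) g"
    and X_compact: "compact X"
    and U_compact: "compact U"
    and m_pos: "m \<ge> 1"
    and h_smooth: "ck m h"
    and rel_deg: "\<And>i x. i + 1 < m \<Longrightarrow> lie_g g (lie_iter f i h) x = 0"
    and Xe_def: "Xe = {xe. \<exists>ue\<in>U. 0 = f xe + g xe *v ue}"
    and Xe_closed: "closed Xe"
    and Xe_convex: "convex Xe"
    and g_full_rank: "\<And>x. x \<in> Xe \<Longrightarrow> rank (g x) = CARD('m)"
    and Gamma_K: "\<And>i. 1 \<le> i \<Longrightarrow> i \<le> m \<Longrightarrow> class_K (\<Gamma> i)"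
    and Gamma_smooth: "\<And>i. 1 \<le> i \<Longrightarrow> i \<le> m \<Longrightarrow> ck (m - i) (\<Gamma> i)"
    and c_orth: "\<And>x. c x \<bullet> acoef f g h m x = 0"
    and c_cont: "continuous_on UNIV c"
    and d_cont: "continuous_on UNIV (\<lambda>(s, t). d s t)"
    and d_pos: "d 0 0 > 0"
    and feasible: "\<And>x. x \<in> X \<Longrightarrow> \<exists>u\<in>U.
         acoef f g h m x \<bullet> u \<ge> bcoef f \<Gamma> h m x \<and>
         c x \<bullet> (u - (- (pinv (g (closest_point Xe x)) *v f (closest_point Xe x))))
           \<ge> d (h x) (norm (x - closest_point Xe x))"
    and pi_feas: "\<And>x. x \<in> X \<Longrightarrow> \<pi>' x \<in> U \<and>
         acoef f g h m x \<bullet> \<pi>' x \<ge> bcoef f \<Gamma> h m x \<and>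
         c x \<bullet> (\<pi>' x - (- (pinv (g (closest_point Xe x)) *v f (closest_point Xe x))))
           \<ge> d (h x) (norm (x - closest_point Xe x))"
    and pi_min: "\<And>x u. x \<in> X \<Longrightarrow> u \<in> U \<Longrightarrow>
         acoef f g h m x \<bullet> u \<ge> bcoef f \<Gamma> h m x \<Longrightarrow>
         c x \<bullet> (u - (- (pinv (g (closest_point Xe x)) *v f (closest_point Xe x))))
           \<ge> d (h x) (norm (x - closest_point Xe x)) \<Longrightarrow>
         (norm (\<pi>' x - un x))\<^sup>2 \<le> (norm (u - un x))\<^sup>2"
    and pi_interior: "\<And>x. x \<in> X \<Longrightarrow> \<pi>' x \<notin> frontier U"
    and xe_X: "xe \<in> X"
    and ue_def: "ue = \<pi>' xe"
    and equilibrium: "0 = f xe + g xe *v ue"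
  shows "un xe = ue \<or>
         (d (h xe) 0 = 0 \<and>
          (\<exists>\<rho>\<ge>0. un xe = (- (pinv (g xe) *v f xe)) - \<rho> *\<^sub>R c xe))"
proof -
  interpret hocbf f g h m \<Gamma>
    using f_smooth h_smooth m_pos rel_deg Gamma_K Gamma_smooth by unfold_locales
  have ue_U: "ue \<in> U" using pi_feas[OF xe_X] ue_def by simp
  have xe_Xe: "xe \<in> Xe" using Xe_def ue_U equilibrium by blast
  have zeta: "- (pinv (g xe) *v f xe) = ue"
  proof -
    have "f xe = - (g xe *v ue)" using equilibrium by (simp add: eq_neg_iff_add_eq_0)
    then show ?thesis
      using pinv_mult_cancel_left[OF g_full_rank[OF xe_Xe]]
      by (simp add: linear_neg[OF matrix_vector_mul_linear])
  qed
  note at_xe = closest_point_self[OF xe_Xe] zeta ue_def[symmetric]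
  have d_nonpos: "d (h xe) 0 \<le> 0" using pi_feas[OF xe_X] unfolding at_xe by simp
  then have "h xe \<noteq> 0" using d_pos by auto
  then have cbf_inactive: "acoef f g h m xe \<bullet> ue > bcoef f \<Gamma> h m xe"
    using pi_feas[OF xe_X] cbf_constraint_active_imp_h_eq_0[OF equilibrium] ue_def by force
  have "ue \<in> interior U"
    using pi_interior[OF xe_X] ue_U closure_subset unfolding ue_def frontier_def by blast
  moreover have "norm (ue - un xe) \<le> norm (u - un xe)"
    if "u \<in> U" "acoef f g h m xe \<bullet> u \<ge> bcoef f \<Gamma> h m xe" "c xe \<bullet> (u - ue) \<ge> d (h xe) 0" for u
    using pi_min[OF xe_X that(1,2)] that(3) unfolding at_xe by (auto intro: power2_le_imp_le)
  ultimately show ?thesis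
    using nearest_point_kkt[OF _ cbf_inactive d_nonpos] unfolding zeta by blast
qed

end
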